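(* For all integers $t,n$: (i) the restriction $\phi_*:X_{t,n}\to Y_t$ is injective; (ii) there are bijections $\alpha:X_{t,n}\to X_{-t,n+6}$ and $\beta:Y_t\to Y_{-t}$ such that $\phi_*\circ\alpha=\beta\circ\phi_*$ on $X_{t,n}$; (iii) there is a bijection $\gamma:X_{t,n}\to X_{t,n+12}$ such that $\phi_*\circ\gamma=\phi_*$ on $X_{t,n}$; (iv) the restriction $\phi_*:\coprod_{j=0}^{11}X_{t,n+j}\to Y_t$ is a bijection.
   Context: $B_3=\langle\sigma_1,\sigma_2:\sigma_1\sigma_2\sigma_1=\sigma_2\sigma_1\sigma_2\rangle$. The homomorphism $\phi:B_3\to\mathrm{SL}_2(\mathbb{Z})$ is defined by $\phi(\sigma_1)=\begin{bmatrix}1&1\\0&1\end{bmatrix}$, $\phi(\sigma_2)=\begin{bmatrix}1&0\\-1&1\end{bmatrix}$; it is surjective and induces a map $\phi_*$ from the set of conjugacy classes of $B_3$ to the set of conjugacy classes of $\mathrm{SL}_2(\mathbb{Z})$. Let $\epsilon:B_3\to\mathbb{Z}$ be the exponent sum homomorphism ($\epsilon(\sigma_1)=\epsilon(\sigma_2)=1$), and define the trace of $g\in B_3$ as $\mathrm{tr}(\phi(g))$; both are class functions. $X_{t,n}$ is the set of conjugacy classes in $B_3$ of trace $t$ and exponent sum $n$, and $Y_t$ is the set of conjugacy classes in $\mathrm{SL}_2(\mathbb{Z})$ of trace $t$. *)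

theory Defs
  imports Main
begin

datatype gen = Sig1 | Sig2

text \<open>A letter is a generator with a sign: (g, True) is g, (g, False) is g inverse.\<close>
type_synonym letter = "gen \<times> bool"
type_synonym word = "letter list"

definition inv_letter :: "letter \<Rightarrow> letter" where
  "inv_letter x = (fst x, \<not> snd x)"

definition inv_word :: "word \<Rightarrow> word" where
  "inv_word w = rev (map inv_letter w)"

text \<open>Equality in B_3 = free group on sigma1, sigma2 modulo the braid relation:
  the smallest equivalence relation on words closed under inserting/removing
  x x^-1 and under replacing sigma1 sigma2 sigma1 by sigma2 sigma1 sigma2 inside a word.\<close>
inductive braid_eq :: "word \<Rightarrow> word \<Rightarrow> bool" where
  refl: "braid_eq u u"
| sym: "braid_eq u v \<Longrightarrow> braid_eq v u"
| trans: "braid_eq u v \<Longrightarrow> braid_eq v w \<Longrightarrow> braid_eq u w"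
| cancel: "braid_eq (u @ [x, inv_letter x] @ v) (u @ v)"
| braid: "braid_eq (u @ [(Sig1, True), (Sig2, True), (Sig1, True)] @ v)
                   (u @ [(Sig2, True), (Sig1, True), (Sig2, True)] @ v)"

definition braid_conj :: "word \<Rightarrow> word \<Rightarrow> bool" where
  "braid_conj u v \<longleftrightarrow> (\<exists>w. braid_eq (w @ u @ inv_word w) v)"

definition braid_class :: "word \<Rightarrow> word set" where
  "braid_class u = {v. braid_conj u v}"

fun exp_sum :: "word \<Rightarrow> int" where
  "exp_sum [] = 0"
| "exp_sum (x # w) = (if snd x then 1 else -1) + exp_sum w"

text \<open>(a, b, c, d) represents the matrix [[a, b], [c, d]].\<close>
type_synonym mat2 = "int \<times> int \<times> int \<times> int"

definition mmul :: "mat2 \<Rightarrow> mat2 \<Rightarrow> mat2" where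
  "mmul A B = (case A of (a, b, c, d) \<Rightarrow> case B of (e, f, g, h) \<Rightarrow>
      (a*e + b*g, a*f + b*h, c*e + d*g, c*f + d*h))"

definition mid :: mat2 where "mid = (1, 0, 0, 1)"

definition mdet :: "mat2 \<Rightarrow> int" where
  "mdet A = (case A of (a, b, c, d) \<Rightarrow> a*d - b*c)"

definition mtr :: "mat2 \<Rightarrow> int" where
  "mtr A = (case A of (a, b, c, d) \<Rightarrow> a + d)"

definition SL2Z :: "mat2 set" where
  "SL2Z = {A. mdet A = 1}"

definition sl2_conj :: "mat2 \<Rightarrow> mat2 \<Rightarrow> bool" where
  "sl2_conj A B \<longleftrightarrow> (\<exists>P \<in> SL2Z. mmul P A = mmul B P)"

definition sl2_class :: "mat2 \<Rightarrow> mat2 set" where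
  "sl2_class A = {B \<in> SL2Z. sl2_conj A B}"

fun letter_mat :: "letter \<Rightarrow> mat2" where
  "letter_mat (Sig1, True) = (1, 1, 0, 1)"
| "letter_mat (Sig1, False) = (1, -1, 0, 1)"
| "letter_mat (Sig2, True) = (1, 0, -1, 1)"
| "letter_mat (Sig2, False) = (1, 0, 1, 1)"

fun phi :: "word \<Rightarrow> mat2" where
  "phi [] = mid"
| "phi (x # w) = mmul (letter_mat x) (phi w)"

definition btr :: "word \<Rightarrow> int" where
  "btr w = mtr (phi w)"

text \<open>phi_* on conjugacy classes (well defined since phi is a homomorphism).\<close>
definition phi_star :: "word set \<Rightarrow> mat2 set" where
  "phi_star C = sl2_class (phi (SOME w. w \<in> C))"

definition X :: "int \<Rightarrow> int \<Rightarrow> word set set" where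
  "X t n = {braid_class w | w. btr w = t \<and> exp_sum w = n}"

definition Y :: "int \<Rightarrow> mat2 set set" where
  "Y t = {sl2_class A | A. A \<in> SL2Z \<and> mtr A = t}"

end

theory Submission imports Defs begin

(* Write y = \<sigma>1\<sigma>2 and \<Delta> = \<sigma>1\<sigma>2\<sigma>1, so that y^3 = \<Delta>^2 is central and
   \<phi>(\<Delta>^2) = -I, \<epsilon>(\<Delta>^2) = 6.  Pushing powers of \<Delta>^2 to the front, every braid
   equals \<Delta>^(2m) \<Delta>^a (y^e1 \<Delta>) ... (y^ek \<Delta>) y^c with a \<in> {0,1}, ei \<in> {1,2}, c \<le> 2.
   Up to sign, \<phi>(y \<Delta>) and \<phi>(y^2 \<Delta>) are the positive matrices [[1,0],[1,1]] and
   [[1,1],[0,1]], and a ping-pong argument shows that such a word maps to I only if it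
   is \<Delta>^(2m) with m even.  Hence the kernel of \<phi> is generated by the central element
   \<Delta>^4 of exponent sum 12, so a braid is determined by its image under \<phi> together
   with its exponent sum.  As \<phi> is onto, two braids are conjugate iff their images are
   conjugate in SL_2(Z) and their exponent sums agree, which gives (i) and (iv); and
   multiplying classes by the central elements \<Delta>^2 and \<Delta>^4 gives (ii) and (iii). *)

lemma inv_letter_inv_letter [simp]: "inv_letter (inv_letter x) = x"
  by (simp add: inv_letter_def)

lemma inv_word_simps [simp]:
  "inv_word [] = []" "inv_word (x # w) = inv_word w @ [inv_letter x]"
  "inv_word (u @ v) = inv_word v @ inv_word u" "inv_word (inv_word w) = w"
  by (simp_all add: inv_word_def rev_map comp_def)

lemmas [trans] = braid_eq.trans

lemma braid_eq_append_cong: "braid_eq a b \<Longrightarrow> braid_eq (p @ a @ q) (p @ b @ q)"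
proof (induction rule: braid_eq.induct)
  case (refl u) then show ?case by (rule braid_eq.refl)
next
  case (sym u v) then show ?case by (simp add: braid_eq.sym)
next
  case (trans u v w) then show ?case by (metis braid_eq.trans)
next
  case (cancel u x v) then show ?case using braid_eq.cancel[of "p @ u" x "v @ q"] by simp
next
  case (braid u v) then show ?case using braid_eq.braid[of "p @ u" "v @ q"] by simp
qed

lemma braid_eq_append_left: "braid_eq a b \<Longrightarrow> braid_eq (p @ a) (p @ b)"
  using braid_eq_append_cong[of a b p "[]"] by simp

lemma braid_eq_append_right: "braid_eq a b \<Longrightarrow> braid_eq (a @ q) (b @ q)"
  using braid_eq_append_cong[of a b "[]" q] by simp

lemma braid_eq_cancel_letter: "braid_eq [x, inv_letter x] []"
  using braid_eq.cancel[of "[]" x "[]"] by simp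

lemma braid_eq_append_inv_word: "braid_eq (w @ inv_word w) []"
proof (induction w)
  case Nil then show ?case by (simp add: braid_eq.refl)
next
  case (Cons x w)
  have "braid_eq ([x] @ (w @ inv_word w) @ [inv_letter x]) ([x] @ [] @ [inv_letter x])"
    by (rule braid_eq_append_cong[OF Cons])
  then have "braid_eq ((x # w) @ inv_word (x # w)) [x, inv_letter x]" by simp
  then show ?case using braid_eq_cancel_letter braid_eq.trans by blast
qed

lemma braid_eq_inv_word_append: "braid_eq (inv_word w @ w) []"
  using braid_eq_append_inv_word[of "inv_word w"] by simp

lemma mmul_assoc: "mmul (mmul A B) C = mmul A (mmul B C)"
  by (cases A; cases B; cases C) (simp add: mmul_def algebra_simps)

lemma mmul_mid [simp]: "mmul mid A = A" "mmul A mid = A"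
  by (cases A; simp add: mmul_def mid_def)+

lemma mdet_mmul: "mdet (mmul A B) = mdet A * mdet B"
  by (cases A; cases B) (simp add: mmul_def mdet_def algebra_simps)

lemma phi_append: "phi (u @ v) = mmul (phi u) (phi v)"
  by (induction u) (simp_all add: mmul_assoc)

lemma letter_mat_inv_letter: "mmul (letter_mat x) (letter_mat (inv_letter x)) = mid"
  by (cases x rule: letter_mat.cases) (auto simp: inv_letter_def mmul_def mid_def)

lemma phi_braid_eq: "braid_eq u v \<Longrightarrow> phi u = phi v"
proof (induction rule: braid_eq.induct)
  case (cancel u x v)
  have "phi [x, inv_letter x] = mid"
    using letter_mat_inv_letter[of x] by simp
  then show ?case by (simp add: phi_append mmul_assoc[symmetric])
next
  case (braid u v)
  have "phi [(Sig1, True), (Sig2, True), (Sig1, True)] = phi [(Sig2, True), (Sig1, True), (Sig2, True)]"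
    by (simp add: mmul_def mid_def)
  then show ?case
    using phi_append[of "[(Sig1, True), (Sig2, True), (Sig1, True)]" v]
      phi_append[of "[(Sig2, True), (Sig1, True), (Sig2, True)]" v]
    by (simp add: phi_append del: phi.simps)
qed auto

lemma phi_append_inv_word: "mmul (phi w) (phi (inv_word w)) = mid"
  using phi_braid_eq[OF braid_eq_append_inv_word[of w]] by (simp add: phi_append)

lemma phi_inv_word_append: "mmul (phi (inv_word w)) (phi w) = mid"
  using phi_braid_eq[OF braid_eq_inv_word_append[of w]] by (simp add: phi_append)

lemma phi_in_SL2Z: "phi w \<in> SL2Z"
proof (induction w)
  case (Cons x w)
  have "mdet (letter_mat x) = 1" by (cases x rule: letter_mat.cases) (auto simp: mdet_def)
  then show ?case using Cons by (simp add: SL2Z_def mdet_mmul)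
qed (simp add: SL2Z_def mid_def mdet_def)

lemma exp_sum_append: "exp_sum (u @ v) = exp_sum u + exp_sum v"
  by (induction u) auto

lemma exp_sum_inv_word: "exp_sum (inv_word w) = - exp_sum w"
  by (induction w) (auto simp: exp_sum_append inv_letter_def)

lemma exp_sum_braid_eq: "braid_eq u v \<Longrightarrow> exp_sum u = exp_sum v"
  by (induction rule: braid_eq.induct) (auto simp: exp_sum_append inv_letter_def)

section \<open>The central element \<open>\<Delta>\<^sup>2\<close>\<close>

abbreviation s1 :: letter where "s1 \<equiv> (Sig1, True)"
abbreviation s2 :: letter where "s2 \<equiv> (Sig2, True)"
abbreviation delta :: word where "delta \<equiv> [s1, s2, s1]"
abbreviation sigma12 :: word where "sigma12 \<equiv> [s1, s2]"
abbreviation delta2 :: word where "delta2 \<equiv> delta @ delta"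
abbreviation delta2_inv :: word where "delta2_inv \<equiv> inv_word delta2"

lemma braid_relation: "braid_eq delta [s2, s1, s2]"
  using braid_eq.braid[of "[]" "[]"] by simp

lemma sigma12_cube: "braid_eq (sigma12 @ sigma12 @ sigma12) delta2"
  using braid_eq_append_cong[OF braid_eq.sym[OF braid_relation], of "[s1, s2, s1]" "[]"] by simp

lemma delta_s1: "braid_eq (delta @ [s1]) (s2 # delta)"
  using braid_eq_append_cong[OF braid_eq.sym[OF braid_relation], of "[]" "[s1]"]
  by (simp add: braid_eq.sym)

lemma delta_s2: "braid_eq (delta @ [s2]) (s1 # delta)"
  using braid_eq_append_cong[OF braid_eq.sym[OF braid_relation], of "[s1]" "[]"] by simp

lemma delta2_commute_letter:
  assumes "snd l" shows "braid_eq (delta2 @ [l]) (l # delta2)"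
proof -
  have swap: "braid_eq (delta @ [x]) (x' # delta)" "braid_eq (delta @ [x']) (x # delta)"
    if "x = s1 \<and> x' = s2 \<or> x = s2 \<and> x' = s1" for x x'
    using that delta_s1 delta_s2 by auto
  obtain l' where l': "l = s1 \<and> l' = s2 \<or> l = s2 \<and> l' = s1"
    using assms by (cases l; cases "fst l") auto
  have "braid_eq (delta2 @ [l]) (delta @ l' # delta)"
    using braid_eq_append_left[OF swap(1)[OF l'], of delta] by simp
  also have "braid_eq (delta @ l' # delta) (l # delta2)"
    using braid_eq_append_right[OF swap(2)[OF l'], of delta] by simp
  finally show ?thesis .
qed

definition positive :: "word \<Rightarrow> bool" where
  "positive w \<longleftrightarrow> (\<forall>l \<in> set w. snd l)"

lemma delta2_commute_positive: "positive w \<Longrightarrow> braid_eq (delta2 @ w) (w @ delta2)"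
proof (induction w)
  case Nil then show ?case by (simp add: braid_eq.refl)
next
  case (Cons l w)
  then have "positive w" "snd l" by (auto simp: positive_def)
  have "braid_eq (delta2 @ [l] @ w) ([l] @ delta2 @ w)"
    using braid_eq_append_right[OF delta2_commute_letter[OF \<open>snd l\<close>], of w] by simp
  also have "braid_eq ([l] @ delta2 @ w) ([l] @ w @ delta2)"
    by (rule braid_eq_append_left[OF Cons.IH[OF \<open>positive w\<close>]])
  finally show ?case by simp
qed

lemma delta2_inv_commute_positive:
  assumes "positive w" shows "braid_eq (delta2_inv @ w) (w @ delta2_inv)"
proof -
  have "braid_eq (delta2_inv @ w) (delta2_inv @ w @ delta2 @ delta2_inv)"
    using braid_eq_append_left[OF braid_eq.sym[OF braid_eq_append_inv_word[of delta2]],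
        of "delta2_inv @ w"] by simp
  also have "braid_eq \<dots> (delta2_inv @ delta2 @ w @ delta2_inv)"
    using braid_eq_append_cong[OF braid_eq.sym[OF delta2_commute_positive[OF assms]],
        of delta2_inv delta2_inv] by simp
  also have "braid_eq \<dots> (w @ delta2_inv)"
    using braid_eq_append_right[OF braid_eq_inv_word_append[of delta2], of "w @ delta2_inv"] by simp
  finally show ?thesis .
qed

definition delta2_pow :: "int \<Rightarrow> word" where
  "delta2_pow m = (if 0 \<le> m then concat (replicate (nat m) delta2)
                   else concat (replicate (nat (- m)) delta2_inv))"

lemma concat_replicate_Suc: "concat (replicate (Suc n) x) = concat (replicate n x) @ x"
  by (induction n) auto

lemma delta2_pow_0 [simp]: "delta2_pow 0 = []"
  by (simp add: delta2_pow_def)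

lemma delta2_pow_succ: "braid_eq (delta2_pow m @ delta2) (delta2_pow (m + 1))"
proof (cases "0 \<le> m")
  case True
  then have "nat (m + 1) = Suc (nat m)" by simp
  with True show ?thesis
    by (simp add: delta2_pow_def concat_replicate_Suc braid_eq.refl
        del: replicate.simps inv_word_simps)
next
  case False
  moreover have "nat (- m) = Suc (nat (- (m + 1)))" using False by simp
  ultimately have "delta2_pow m = delta2_pow (m + 1) @ delta2_inv"
    by (cases "m = -1")
      (simp add: delta2_pow_def,
       simp add: delta2_pow_def concat_replicate_Suc del: replicate.simps inv_word_simps)
  then have "delta2_pow m @ delta2 = delta2_pow (m + 1) @ (delta2_inv @ delta2) @ []" by simp
  also have "braid_eq \<dots> (delta2_pow (m + 1) @ [] @ [])"
    by (rule braid_eq_append_cong, rule braid_eq_inv_word_append)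
  finally show ?thesis by simp
qed

lemma delta2_pow_pred: "braid_eq (delta2_pow m @ delta2_inv) (delta2_pow (m - 1))"
proof -
  have "braid_eq (delta2_pow m @ delta2_inv) (delta2_pow (m - 1) @ delta2 @ delta2_inv)"
    using braid_eq_append_right[OF delta2_pow_succ[of "m - 1"], of delta2_inv]
    by (simp add: braid_eq.sym)
  also have "braid_eq \<dots> (delta2_pow (m - 1) @ [])"
    by (rule braid_eq_append_left, rule braid_eq_append_inv_word)
  finally show ?thesis by simp
qed

lemma delta2_pow_absorb:
  "positive b \<Longrightarrow> braid_eq (delta2_pow m @ b @ delta2) (delta2_pow (m + 1) @ b)"
  by (rule braid_eq.trans[OF braid_eq_append_left[OF braid_eq.sym[OF delta2_commute_positive]]])
    (use braid_eq_append_right[OF delta2_pow_succ] in simp_all)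

lemma delta2_pow_absorb_inv:
  "positive b \<Longrightarrow> braid_eq (delta2_pow m @ b @ delta2_inv) (delta2_pow (m - 1) @ b)"
  by (rule braid_eq.trans[OF braid_eq_append_left[OF braid_eq.sym[OF delta2_inv_commute_positive]]])
    (use braid_eq_append_right[OF delta2_pow_pred] in simp_all)

section \<open>A normal form for braids\<close>

definition sigma12_pow :: "nat \<Rightarrow> word" where
  "sigma12_pow e = concat (replicate e sigma12)"

lemma sigma12_pow_Suc: "sigma12_pow (Suc e) = sigma12_pow e @ sigma12"
  by (simp add: sigma12_pow_def concat_replicate_Suc del: replicate.simps)

definition nf_body :: "bool \<Rightarrow> nat list \<Rightarrow> nat \<Rightarrow> word" where
  "nf_body a es c = (if a then delta else []) @ concat (map (\<lambda>e. sigma12_pow e @ delta) es)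
                    @ sigma12_pow c"

lemma positive_nf_body: "positive (nf_body a es c)"
  by (auto simp: positive_def nf_body_def sigma12_pow_def)

type_synonym nf = "int \<times> bool \<times> nat list \<times> nat"

fun nf_word :: "nf \<Rightarrow> word" where
  "nf_word (m, a, es, c) = delta2_pow m @ nf_body a es c"

fun nf_valid :: "nf \<Rightarrow> bool" where
  "nf_valid (m, a, es, c) \<longleftrightarrow> c \<le> 2 \<and> set es \<subseteq> {1, 2}"

text \<open>A completed \<open>sigma12\<^sup>3\<close> or a product \<open>delta @ delta\<close> is \<open>\<Delta>\<^sup>2\<close>, which is central and
  therefore moves into the prefix \<open>delta2_pow m\<close>.\<close>

fun nf_mul_sigma12 :: "nf \<Rightarrow> nf" where
  "nf_mul_sigma12 (m, a, es, c) = (if c = 2 then (m + 1, a, es, 0) else (m, a, es, Suc c))"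

fun nf_mul_delta :: "nf \<Rightarrow> nf" where
  "nf_mul_delta (m, a, es, c) =
    (if c \<noteq> 0 then (m, a, es @ [c], 0)
     else if es = [] then (if a then (m + 1, False, [], 0) else (m, True, [], 0))
     else (m + 1, a, butlast es, last es))"

fun nf_mul_delta2_inv :: "nf \<Rightarrow> nf" where
  "nf_mul_delta2_inv (m, r) = (m - 1, r)"

lemma nf_word_mul_delta2_inv:
  "braid_eq (nf_word st @ delta2_inv) (nf_word (nf_mul_delta2_inv st))"
  using delta2_pow_absorb_inv[OF positive_nf_body]
  by (cases st) (simp del: inv_word_simps)

lemma nf_word_mul_sigma12: "braid_eq (nf_word st @ sigma12) (nf_word (nf_mul_sigma12 st))"
proof -
  obtain m a es c where st: "st = (m, a, es, c)" by (cases st)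
  show ?thesis
  proof (cases "c = 2")
    case False
    then show ?thesis by (simp add: st nf_body_def sigma12_pow_Suc braid_eq.refl)
  next
    case True
    have "nf_word st @ sigma12 = delta2_pow m @ nf_body a es 0 @ (sigma12 @ sigma12 @ sigma12)"
      by (simp add: st True nf_body_def sigma12_pow_def numeral_2_eq_2)
    also have "braid_eq \<dots> (delta2_pow m @ nf_body a es 0 @ delta2)"
      by (intro braid_eq_append_left sigma12_cube)
    also have "braid_eq \<dots> (delta2_pow (m + 1) @ nf_body a es 0)"
      by (rule delta2_pow_absorb[OF positive_nf_body])
    finally show ?thesis by (simp add: st True)
  qed
qed

lemma nf_word_mul_delta: "braid_eq (nf_word st @ delta) (nf_word (nf_mul_delta st))"
proof -
  obtain m a es c where st: "st = (m, a, es, c)" by (cases st)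
  consider "c \<noteq> 0" | "c = 0" "es = []" "\<not> a" | "c = 0" "es = []" "a"
    | es' e where "c = 0" "es = es' @ [e]"
    by (metis append_butlast_last_id)
  then show ?thesis
  proof cases
    case 3
    have "nf_word st @ delta = delta2_pow m @ [] @ delta2"
      by (simp add: st 3 nf_body_def sigma12_pow_def)
    also have "braid_eq \<dots> (delta2_pow (m + 1) @ [])"
      by (rule delta2_pow_absorb) (simp add: positive_def)
    finally show ?thesis by (simp add: st 3 nf_body_def sigma12_pow_def)
  next
    case 4
    have "nf_word st @ delta = delta2_pow m @ nf_body a es' e @ delta2"
      by (simp add: st 4 nf_body_def sigma12_pow_def)
    also have "braid_eq \<dots> (delta2_pow (m + 1) @ nf_body a es' e)"
      by (rule delta2_pow_absorb[OF positive_nf_body])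
    finally show ?thesis by (simp add: st 4)
  qed (simp_all add: st nf_body_def sigma12_pow_def braid_eq.refl)
qed

lemma nf_valid_mul_sigma12: "nf_valid st \<Longrightarrow> nf_valid (nf_mul_sigma12 st)"
  by (cases st) auto

lemma nf_valid_mul_delta: "nf_valid st \<Longrightarrow> nf_valid (nf_mul_delta st)"
proof -
  assume valid: "nf_valid st"
  obtain m a es c where st: "st = (m, a, es, c)" by (cases st)
  have "es \<noteq> [] \<Longrightarrow> last es \<in> {1, 2}" using valid st last_in_set by auto
  moreover have "set (butlast es) \<subseteq> {1, 2}" using valid st in_set_butlastD by fastforce
  ultimately show ?thesis using valid st by auto
qed

lemma braid_eq_letter_via_delta2:
  assumes "braid_eq (delta2 @ [l]) r" shows "braid_eq [l] (delta2_inv @ r)"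
proof -
  have "braid_eq [l] ((delta2_inv @ delta2) @ [l])"
    using braid_eq_append_right[OF braid_eq_inv_word_append[of delta2], of "[l]"]
    by (simp add: braid_eq.sym)
  also have "braid_eq \<dots> (delta2_inv @ r)"
    using braid_eq_append_left[OF assms, of delta2_inv] by simp
  finally show ?thesis .
qed

lemma s1_expansion: "braid_eq [s1] (delta2_inv @ sigma12 @ sigma12 @ delta)"
  by (rule braid_eq_letter_via_delta2)
    (use braid_eq_append_right[OF sigma12_cube, of "[s1]"] in \<open>simp add: braid_eq.sym\<close>)

lemma s2_expansion: "braid_eq [s2] (delta2_inv @ delta @ sigma12 @ sigma12)"
  by (rule braid_eq_letter_via_delta2) (simp add: braid_eq.refl)

lemma s1_inv_expansion: "braid_eq [inv_letter s1] (delta2_inv @ delta @ sigma12)"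
proof (rule braid_eq_letter_via_delta2)
  have "delta2 @ [inv_letter s1] = (delta @ sigma12) @ [s1, inv_letter s1] @ []" by simp
  also have "braid_eq \<dots> ((delta @ sigma12) @ [] @ [])"
    by (rule braid_eq_append_cong, rule braid_eq_cancel_letter)
  finally show "braid_eq (delta2 @ [inv_letter s1]) (delta @ sigma12)" by simp
qed

lemma s2_inv_expansion: "braid_eq [inv_letter s2] (delta2_inv @ sigma12 @ delta)"
proof (rule braid_eq_letter_via_delta2)
  have "braid_eq (delta2 @ [inv_letter s2]) ((sigma12 @ sigma12 @ sigma12) @ [inv_letter s2])"
    by (rule braid_eq_append_right, rule braid_eq.sym, rule sigma12_cube)
  also have "(sigma12 @ sigma12 @ sigma12) @ [inv_letter s2]
      = (sigma12 @ delta) @ [s2, inv_letter s2] @ []" by simp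
  also have "braid_eq \<dots> ((sigma12 @ delta) @ [] @ [])"
    by (rule braid_eq_append_cong, rule braid_eq_cancel_letter)
  finally show "braid_eq (delta2 @ [inv_letter s2]) (sigma12 @ delta)" by simp
qed

fun nf_step :: "nf \<Rightarrow> letter \<Rightarrow> nf" where
  "nf_step st (Sig1, True) = nf_mul_delta (nf_mul_sigma12 (nf_mul_sigma12 (nf_mul_delta2_inv st)))"
| "nf_step st (Sig2, True) = nf_mul_sigma12 (nf_mul_sigma12 (nf_mul_delta (nf_mul_delta2_inv st)))"
| "nf_step st (Sig1, False) = nf_mul_sigma12 (nf_mul_delta (nf_mul_delta2_inv st))"
| "nf_step st (Sig2, False) = nf_mul_delta (nf_mul_sigma12 (nf_mul_delta2_inv st))"

lemma nf_valid_step: "nf_valid st \<Longrightarrow> nf_valid (nf_step st l)"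
proof -
  have "nf_valid (nf_mul_delta2_inv st) = nf_valid st" by (cases st) simp
  then show "nf_valid st \<Longrightarrow> nf_valid (nf_step st l)"
    by (cases "(st, l)" rule: nf_step.cases)
      (simp_all add: nf_valid_mul_sigma12 nf_valid_mul_delta del: nf_valid.simps)
qed

lemma nf_word_step: "braid_eq (nf_word st @ [l]) (nf_word (nf_step st l))"
proof -
  have D: "braid_eq (nf_word s @ delta @ w) (nf_word (nf_mul_delta s) @ w)" for s w
    using braid_eq_append_right[OF nf_word_mul_delta[of s], of w] by simp
  have Y: "braid_eq (nf_word s @ sigma12 @ w) (nf_word (nf_mul_sigma12 s) @ w)" for s w
    using braid_eq_append_right[OF nf_word_mul_sigma12[of s], of w] by simp
  have Z: "braid_eq (nf_word s @ delta2_inv @ w) (nf_word (nf_mul_delta2_inv s) @ w)" for s w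
    using braid_eq_append_right[OF nf_word_mul_delta2_inv[of s], of w] by simp
  note T = braid_eq.trans and L = braid_eq_append_left[where p = "nf_word st"]
  consider "l = s1" | "l = inv_letter s1" | "l = s2" | "l = inv_letter s2"
    by (cases l rule: letter_mat.cases) (auto simp: inv_letter_def)
  then show ?thesis
  proof cases
    case 1
    show ?thesis
      using T[OF L[OF s1_expansion] T[OF Z T[OF Y T[OF Y nf_word_mul_delta]]]] by (simp add: 1)
  next
    case 2
    show ?thesis
      using T[OF L[OF s1_inv_expansion] T[OF Z T[OF D nf_word_mul_sigma12]]]
      by (simp add: 2 inv_letter_def)
  next
    case 3
    show ?thesis
      using T[OF L[OF s2_expansion] T[OF Z T[OF D T[OF Y nf_word_mul_sigma12]]]] by (simp add: 3)
  next
    case 4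
    show ?thesis
      using T[OF L[OF s2_inv_expansion] T[OF Z T[OF Y nf_word_mul_delta]]]
      by (simp add: 4 inv_letter_def)
  qed
qed

definition normal_form :: "word \<Rightarrow> nf" where
  "normal_form w = foldl nf_step (0, False, [], 0) w"

lemma nf_valid_normal_form: "nf_valid (normal_form w)"
  by (induction w rule: rev_induct) (simp_all add: normal_form_def nf_valid_step)

lemma braid_eq_normal_form: "braid_eq w (nf_word (normal_form w))"
proof (induction w rule: rev_induct)
  case Nil then show ?case by (simp add: normal_form_def nf_body_def sigma12_pow_def braid_eq.refl)
next
  case (snoc l w)
  have "braid_eq (w @ [l]) (nf_word (normal_form w) @ [l])"
    using snoc braid_eq_append_right by blast
  also have "braid_eq \<dots> (nf_word (normal_form (w @ [l])))"
    using nf_word_step by (simp add: normal_form_def)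
  finally show ?case .
qed

section \<open>The kernel of \<open>phi\<close>\<close>

definition negI :: mat2 where "negI = (-1, 0, 0, -1)"

lemma phi_delta2: "phi delta2 = negI"
  by (simp add: negI_def mid_def mmul_def)

lemma phi_delta2_inv: "phi delta2_inv = negI"
  by (simp add: negI_def mid_def mmul_def inv_letter_def)

lemma phi_concat_replicate_negI:
  "phi w = negI \<Longrightarrow> phi (concat (replicate k w)) = (if even k then mid else negI)"
  by (induction k) (auto simp: phi_append negI_def mid_def mmul_def)

lemma phi_delta2_pow: "phi (delta2_pow m) = (if even m then mid else negI)"
  unfolding delta2_pow_def
  using phi_concat_replicate_negI[OF phi_delta2, of "nat m"]
    phi_concat_replicate_negI[OF phi_delta2_inv, of "nat (- m)"]
  by (auto simp: even_nat_iff simp del: inv_word_simps)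

lemma exp_sum_concat_replicate: "exp_sum (concat (replicate k w)) = int k * exp_sum w"
  by (induction k) (auto simp: exp_sum_append algebra_simps)

lemma exp_sum_delta2_pow: "exp_sum (delta2_pow m) = 6 * m"
proof -
  have "exp_sum delta2 = 6" "exp_sum delta2_inv = -6" by (simp_all add: inv_letter_def)
  then show ?thesis
    unfolding delta2_pow_def
    using exp_sum_concat_replicate[of "nat m" delta2] exp_sum_concat_replicate[of "nat (- m)" delta2_inv]
    by (simp del: inv_word_simps exp_sum.simps)
qed

fun smul :: "int \<Rightarrow> mat2 \<Rightarrow> mat2" where
  "smul k (a, b, c, d) = (k * a, k * b, k * c, k * d)"

lemma mmul_smul: "mmul (smul k A) B = smul k (mmul A B)" "mmul A (smul k B) = smul k (mmul A B)"
  by (cases A; cases B; simp add: mmul_def algebra_simps)+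

lemma smul_smul: "smul k (smul l A) = smul (k * l) A"
  by (cases A) (simp add: algebra_simps)

definition Lmat :: mat2 where "Lmat = (1, 0, 1, 1)"
definition Rmat :: mat2 where "Rmat = (1, 1, 0, 1)"

fun block_mat :: "nat list \<Rightarrow> mat2" where
  "block_mat [] = mid"
| "block_mat (e # es) = mmul (if e = 1 then Lmat else Rmat) (block_mat es)"

lemma phi_blocks:
  "set es \<subseteq> {1, 2} \<Longrightarrow>
    phi (concat (map (\<lambda>e. sigma12_pow e @ delta) es)) = smul ((-1) ^ length es) (block_mat es)"
proof (induction es)
  case Nil then show ?case by (simp add: mid_def)
next
  case (Cons e es)
  have block: "phi (sigma12_pow e @ delta) = smul (-1) (if e = 1 then Lmat else Rmat)"
    using Cons.prems
    by (auto simp: sigma12_pow_def Lmat_def Rmat_def mmul_def mid_def numeral_2_eq_2)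
  have "phi (concat (map (\<lambda>e. sigma12_pow e @ delta) (e # es)))
      = mmul (phi (sigma12_pow e @ delta)) (phi (concat (map (\<lambda>e. sigma12_pow e @ delta) es)))"
    by (simp only: list.map concat.simps phi_append[of "sigma12_pow e @ delta"])
  also have "\<dots> = smul ((-1) ^ length (e # es)) (block_mat (e # es))"
    using Cons by (simp add: block mmul_smul smul_smul del: phi.simps)
  finally show ?case .
qed

lemma block_mat_nonneg:
  "case block_mat es of (p, q, r, s) \<Rightarrow>
     p \<ge> 1 \<and> s \<ge> 1 \<and> q \<ge> 0 \<and> r \<ge> 0 \<and> (es \<noteq> [] \<longrightarrow> q + r \<ge> 1)"
proof (induction es)
  case Nil then show ?case by (simp add: mid_def)
next
  case (Cons e es)
  then show ?case by (cases "block_mat es") (auto simp: Lmat_def Rmat_def mmul_def)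
qed

lemma nf_word_phi_eq_mid:
  assumes valid: "nf_valid (m, a, es, c)" and mid: "phi (nf_word (m, a, es, c)) = mid"
  shows "\<not> a \<and> es = [] \<and> c = 0 \<and> even m"
proof -
  obtain p q r s where block: "block_mat es = (p, q, r, s)" by (cases "block_mat es")
  have nonneg: "p \<ge> 1" "s \<ge> 1" "q \<ge> 0" "r \<ge> 0" "es \<noteq> [] \<Longrightarrow> q + r \<ge> 1"
    using block_mat_nonneg[of es] block by auto
  define d :: int where "d = (if even m then 1 else -1)"
  define k :: int where "k = (-1) ^ length es"
  have d: "phi (delta2_pow m) = (d, 0, 0, d)" "d = 1 \<or> d = -1"
    by (auto simp: d_def phi_delta2_pow mid_def negI_def)
  have k: "k = 1 \<or> k = -1" by (simp add: k_def minus_one_power_iff)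
  have "phi (if a then delta else []) = (if a then (0, 1, -1, 0) else mid)"
    by (simp add: mmul_def mid_def)
  then have "mmul (d, 0, 0, d) (mmul (if a then (0, 1, -1, 0) else mid)
      (mmul (smul k (p, q, r, s)) (phi (sigma12_pow c)))) = mid"
    using mid valid d(1) phi_blocks[of es] block
    by (simp add: nf_body_def phi_append k_def del: phi.simps)
  moreover have "c = 0 \<and> phi (sigma12_pow c) = mid \<or> c = 1 \<and> phi (sigma12_pow c) = (0, 1, -1, 1)
      \<or> c = 2 \<and> phi (sigma12_pow c) = (-1, 1, -1, 0)"
    using valid by (auto simp: le_Suc_eq sigma12_pow_def mmul_def mid_def numeral_2_eq_2)
  ultimately have "\<not> a \<and> c = 0 \<and> q = 0 \<and> r = 0 \<and> d = k"
    using nonneg(1-4)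
    by (cases a; elim disjE conjE; simp add: mid_def mmul_def; use d(2) k in fastforce)
  moreover from this have "es = []" using nonneg(5) by auto
  ultimately show ?thesis by (auto simp: d_def k_def split: if_splits)
qed

theorem phi_kernel: "phi u = mid \<Longrightarrow> \<exists>m. even m \<and> braid_eq u (delta2_pow m)"
proof -
  assume "phi u = mid"
  obtain m a es c where nf: "normal_form u = (m, a, es, c)" by (cases "normal_form u")
  have u: "braid_eq u (nf_word (m, a, es, c))"
    using braid_eq_normal_form[of u] nf by simp
  have "nf_valid (m, a, es, c)" using nf_valid_normal_form[of u] nf by simp
  moreover have "phi (nf_word (m, a, es, c)) = mid" using phi_braid_eq[OF u] \<open>phi u = mid\<close> by simp
  ultimately have "\<not> a \<and> es = [] \<and> c = 0 \<and> even m" by (rule nf_word_phi_eq_mid)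
  with u show ?thesis by (auto simp: nf_body_def sigma12_pow_def)
qed

lemma braid_eq_append_inv_wordD:
  assumes "braid_eq (u @ inv_word v) r" shows "braid_eq u (r @ v)"
proof -
  have "braid_eq u (u @ inv_word v @ v)"
    using braid_eq.sym[OF braid_eq_append_left[OF braid_eq_inv_word_append[of v], of u]] by simp
  also have "braid_eq \<dots> (r @ v)"
    using braid_eq_append_right[OF assms, of v] by simp
  finally show ?thesis .
qed

lemma phi_eqE:
  assumes "phi u = phi v"
  obtains m where "even m" "braid_eq u (delta2_pow m @ v)"
    "exp_sum u = 6 * m + exp_sum v"
proof -
  have "phi (u @ inv_word v) = mid"
    using assms phi_append_inv_word[of v] by (simp add: phi_append del: phi.simps)
  then obtain m where "even m" and "braid_eq (u @ inv_word v) (delta2_pow m)"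
    using phi_kernel by blast
  then have u: "braid_eq u (delta2_pow m @ v)"
    by (intro braid_eq_append_inv_wordD)
  moreover have "exp_sum u = 6 * m + exp_sum v"
    using exp_sum_braid_eq[OF u] by (simp add: exp_sum_append exp_sum_delta2_pow)
  ultimately show ?thesis using \<open>even m\<close> that by simp
qed

theorem braid_eq_iff_phi_exp_sum: "braid_eq u v \<longleftrightarrow> phi u = phi v \<and> exp_sum u = exp_sum v"
proof
  assume "phi u = phi v \<and> exp_sum u = exp_sum v"
  then obtain m where "braid_eq u (delta2_pow m @ v)" "m = 0"
    by (metis phi_eqE add_cancel_right_left mult_eq_0_iff zero_neq_numeral)
  then show "braid_eq u v" by simp
qed (simp add: phi_braid_eq exp_sum_braid_eq)

lemma phi_eq_imp_exp_sum_cong_12: "phi u = phi v \<Longrightarrow> 12 dvd (exp_sum u - exp_sum v)"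
  by (erule phi_eqE) (auto elim!: evenE)

section \<open>Surjectivity of \<open>phi\<close>\<close>

lemma phi_preimage_mmul_letter: "phi w = mmul (letter_mat l) A \<Longrightarrow> phi (inv_letter l # w) = A"
  using letter_mat_inv_letter[of "inv_letter l"] by (simp add: mmul_assoc[symmetric])

lemma phi_onto_unipotent: "\<exists>w. phi w = (1, b, 0, 1)"
proof (induction b rule: int_induct[where k = 0])
  case base then show ?case by (intro exI[of _ "[]"]) (simp add: mid_def)
next
  case (step1 i)
  then obtain w where "phi w = (1, i, 0, 1)" by auto
  then have "phi (s1 # w) = (1, i + 1, 0, 1)" by (simp add: mmul_def)
  then show ?case by blast
next
  case (step2 i)
  then obtain w where "phi w = (1, i, 0, 1)" by auto
  then have "phi ((Sig1, False) # w) = (1, i - 1, 0, 1)" by (simp add: mmul_def)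
  then show ?case by blast
qed

lemma phi_onto_upper_triangular: "a * d = 1 \<Longrightarrow> \<exists>w. phi w = (a, b, 0, d)"
proof -
  assume "a * d = 1"
  then consider "a = 1" "d = 1" | "a = -1" "d = -1" using zmult_eq_1_iff by blast
  then show ?thesis
  proof cases
    case 2
    obtain w where "phi w = (1, -b, 0, 1)" using phi_onto_unipotent by auto
    then have "phi (delta2 @ w) = (a, b, 0, d)"
      using 2 phi_delta2 phi_append[of delta2 w] by (simp add: negI_def mmul_def del: phi.simps)
    then show ?thesis by blast
  qed (use phi_onto_unipotent in auto)
qed

text \<open>Left multiplication by a generator or its inverse is an elementary row operation;
  choosing it to decrease \<open>\<bar>a\<bar> + \<bar>c\<bar>\<close> runs the Euclidean algorithm on the first column.\<close>

lemma phi_onto_mdet_1: "mdet (a, b, c, d) = 1 \<Longrightarrow> \<exists>w. phi w = (a, b, c, d)"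
proof (induction "nat (\<bar>a\<bar> + \<bar>c\<bar>)" arbitrary: a b c d rule: less_induct)
  case less
  have reduce: "\<exists>w. phi w = (a, b, c, d)"
    if row_op: "mmul (letter_mat l) (a, b, c, d) = (a', b', c', d')"
      and smaller: "nat (\<bar>a'\<bar> + \<bar>c'\<bar>) < nat (\<bar>a\<bar> + \<bar>c\<bar>)" for l a' b' c' d'
  proof -
    have "mdet (letter_mat l) = 1" by (cases l rule: letter_mat.cases) (auto simp: mdet_def)
    then have "mdet (a', b', c', d') = 1" using row_op less.prems by (metis mdet_mmul mult_1)
    then obtain w where "phi w = (a', b', c', d')" using less.hyps[OF smaller] by blast
    then show ?thesis using row_op phi_preimage_mmul_letter by metis
  qed
  consider "c = 0" | "a = 0" "c \<noteq> 0" | "a \<noteq> 0" "c \<noteq> 0" by blast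
  then show ?case
  proof cases
    case 1 then show ?thesis using phi_onto_upper_triangular less.prems by (simp add: mdet_def)
  next
    case 2
    have "mmul (letter_mat s2) (mmul (letter_mat s1) (a, b, c, d)) = (c, b + d, 0, -b)"
      using 2 by (simp add: mmul_def)
    moreover have "c * - b = 1" using less.prems 2 by (simp add: mdet_def mult.commute)
    ultimately show ?thesis using phi_onto_upper_triangular phi_preimage_mmul_letter by metis
  next
    case 3
    then have nonzero: "a \<noteq> 0" "c \<noteq> 0" by simp_all
    consider "\<bar>c\<bar> \<le> \<bar>a\<bar>" "(0 < a) = (0 < c)" | "\<bar>c\<bar> \<le> \<bar>a\<bar>" "(0 < a) \<noteq> (0 < c)"
      | "\<bar>a\<bar> < \<bar>c\<bar>" "(0 < a) = (0 < c)" | "\<bar>a\<bar> < \<bar>c\<bar>" "(0 < a) \<noteq> (0 < c)"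
      by linarith
    then show ?thesis
    proof cases
      case 1
      show ?thesis by (rule reduce[of "(Sig1, False)" "a - c" "b - d" c d]) (use 1 nonzero in \<open>auto simp: mmul_def\<close>)
    next
      case 2
      show ?thesis by (rule reduce[of s1 "a + c" "b + d" c d]) (use 2 nonzero in \<open>auto simp: mmul_def\<close>)
    next
      case 4
      show ?thesis by (rule reduce[of "(Sig2, False)" a b "c + a" "d + b"]) (use 4 nonzero in \<open>auto simp: mmul_def\<close>)
    next
      case 3
      show ?thesis by (rule reduce[of s2 a b "c - a" "d - b"]) (use 3 nonzero in \<open>auto simp: mmul_def\<close>)
    qed
  qed
qed

theorem phi_surj: "A \<in> SL2Z \<Longrightarrow> \<exists>w. phi w = A"
  using phi_onto_mdet_1[of "fst A" "fst (snd A)" "fst (snd (snd A))" "snd (snd (snd A))"]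
  by (simp add: SL2Z_def)

fun adj :: "mat2 \<Rightarrow> mat2" where
  "adj (p, q, r, s) = (s, -q, -r, p)"

lemma adj_mmul: "mdet P = 1 \<Longrightarrow> mmul (adj P) P = mid \<and> mmul P (adj P) = mid"
  by (cases P) (simp add: mmul_def mid_def mdet_def algebra_simps)

lemma mdet_adj: "mdet (adj P) = mdet P"
  by (cases P) (simp add: mdet_def algebra_simps)

lemma mid_in_SL2Z: "mid \<in> SL2Z"
  by (simp add: SL2Z_def mid_def mdet_def)

lemma sl2_conj_refl: "sl2_conj A A"
  unfolding sl2_conj_def using mid_in_SL2Z by (metis mmul_mid)

lemma sl2_conj_sym: "sl2_conj A B \<Longrightarrow> sl2_conj B A"
proof -
  assume "sl2_conj A B"
  then obtain P where P: "mdet P = 1" "mmul P A = mmul B P" by (auto simp: sl2_conj_def SL2Z_def)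
  have "mmul (adj P) B = mmul (adj P) (mmul B (mmul P (adj P)))" using adj_mmul[OF P(1)] by simp
  also have "\<dots> = mmul (mmul (adj P) (mmul P A)) (adj P)" using P(2) by (simp add: mmul_assoc)
  also have "\<dots> = mmul A (adj P)" using adj_mmul[OF P(1)] by (simp add: mmul_assoc[symmetric])
  finally have "mmul (adj P) B = mmul A (adj P)" .
  moreover have "adj P \<in> SL2Z" using P(1) mdet_adj by (simp add: SL2Z_def)
  ultimately show ?thesis unfolding sl2_conj_def by blast
qed

lemma sl2_conj_trans: "sl2_conj A B \<Longrightarrow> sl2_conj B C \<Longrightarrow> sl2_conj A C"
proof -
  assume "sl2_conj A B" "sl2_conj B C"
  then obtain P Q where P: "mdet P = 1" "mmul P A = mmul B P"
    and Q: "mdet Q = 1" "mmul Q B = mmul C Q"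
    by (auto simp: sl2_conj_def SL2Z_def)
  have "mmul (mmul Q P) A = mmul C (mmul Q P)"
    by (metis P(2) Q(2) mmul_assoc)
  moreover have "mmul Q P \<in> SL2Z" using P(1) Q(1) by (simp add: SL2Z_def mdet_mmul)
  ultimately show ?thesis unfolding sl2_conj_def by blast
qed

lemma sl2_conj_mmul_scalar:
  "sl2_conj A B \<Longrightarrow> sl2_conj (mmul A (k, 0, 0, k)) (mmul B (k, 0, 0, k))"
proof -
  have scalar_central: "mmul M (k, 0, 0, k) = mmul (k, 0, 0, k) M" for M
    by (cases M) (simp add: mmul_def algebra_simps)
  assume "sl2_conj A B"
  then obtain P where "P \<in> SL2Z" "mmul P A = mmul B P" by (auto simp: sl2_conj_def)
  then show ?thesis unfolding sl2_conj_def by (metis mmul_assoc scalar_central)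
qed

lemma sl2_class_eq_iff:
  "B \<in> SL2Z \<Longrightarrow> sl2_class A = sl2_class B \<longleftrightarrow> sl2_conj A B"
  unfolding sl2_class_def set_eq_iff
  by (metis (mono_tags, lifting) mem_Collect_eq sl2_conj_refl sl2_conj_sym sl2_conj_trans)

lemma sl2_conj_phi_lift:
  assumes "sl2_conj (phi u) (phi v)" obtains w where "phi (w @ u @ inv_word w) = phi v"
proof -
  obtain P where P: "P \<in> SL2Z" "mmul P (phi u) = mmul (phi v) P"
    using assms by (auto simp: sl2_conj_def)
  obtain w where w: "phi w = P" using phi_surj[OF P(1)] by blast
  have "phi (w @ u @ inv_word w) = mmul (mmul (phi v) (phi w)) (phi (inv_word w))"
    using P(2) w by (simp add: phi_append mmul_assoc[symmetric] del: phi.simps)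
  also have "\<dots> = phi v" using phi_append_inv_word[of w] by (simp add: mmul_assoc)
  finally show ?thesis by (rule that)
qed

lemma exp_sum_conj: "exp_sum (w @ u @ inv_word w) = exp_sum u"
  by (simp add: exp_sum_append exp_sum_inv_word)

theorem braid_conj_iff: "braid_conj u v \<longleftrightarrow> sl2_conj (phi u) (phi v) \<and> exp_sum u = exp_sum v"
proof
  assume "braid_conj u v"
  then obtain w where w: "braid_eq (w @ u @ inv_word w) v" by (auto simp: braid_conj_def)
  have "phi v = mmul (phi w) (mmul (phi u) (phi (inv_word w)))"
    using phi_braid_eq[OF w] by (simp add: phi_append del: phi.simps)
  then have "mmul (phi w) (phi u) = mmul (phi v) (phi w)"
    using phi_inv_word_append[of w] by (simp add: mmul_assoc)
  then have "sl2_conj (phi u) (phi v)" unfolding sl2_conj_def using phi_in_SL2Z by blast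
  moreover have "exp_sum u = exp_sum v" using exp_sum_braid_eq[OF w] by (simp add: exp_sum_conj)
  ultimately show "sl2_conj (phi u) (phi v) \<and> exp_sum u = exp_sum v" ..
next
  assume "sl2_conj (phi u) (phi v) \<and> exp_sum u = exp_sum v"
  then obtain w where "phi (w @ u @ inv_word w) = phi v" "exp_sum u = exp_sum v"
    using sl2_conj_phi_lift by metis
  then have "braid_eq (w @ u @ inv_word w) v" by (simp add: braid_eq_iff_phi_exp_sum exp_sum_conj)
  then show "braid_conj u v" by (auto simp: braid_conj_def)
qed

lemma sl2_conj_phi_imp_exp_sum_cong_12:
  assumes "sl2_conj (phi u) (phi v)" shows "12 dvd (exp_sum u - exp_sum v)"
proof -
  obtain w where "phi (w @ u @ inv_word w) = phi v" using assms by (rule sl2_conj_phi_lift)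
  then show ?thesis using phi_eq_imp_exp_sum_cong_12 by (fastforce simp: exp_sum_conj)
qed

lemma braid_eq_imp_braid_conj: "braid_eq u v \<Longrightarrow> braid_conj u v"
  unfolding braid_conj_def by (intro exI[of _ "[]"]) simp

lemma braid_class_eq_iff: "braid_class u = braid_class v \<longleftrightarrow> braid_conj u v"
  unfolding braid_class_def set_eq_iff mem_Collect_eq braid_conj_iff
  by (metis sl2_conj_refl sl2_conj_sym sl2_conj_trans)

lemma braid_conj_some_braid_class: "braid_conj u (SOME w. w \<in> braid_class u)"
proof -
  have "u \<in> braid_class u" by (simp add: braid_class_def braid_conj_iff sl2_conj_refl)
  then have "(SOME w. w \<in> braid_class u) \<in> braid_class u" by (rule someI)
  then show ?thesis by (simp add: braid_class_def)
qed

lemma phi_star_braid_class: "phi_star (braid_class u) = sl2_class (phi u)"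
  using braid_conj_some_braid_class[of u] phi_in_SL2Z
  by (simp add: phi_star_def braid_conj_iff sl2_class_eq_iff sl2_conj_sym)

lemma mem_X_iff: "C \<in> X t n \<longleftrightarrow> (\<exists>w. C = braid_class w \<and> btr w = t \<and> exp_sum w = n)"
  by (auto simp: X_def)

definition class_mul :: "word \<Rightarrow> word set \<Rightarrow> word set" where
  "class_mul c C = braid_class ((SOME w. w \<in> C) @ c)"

lemma class_mul_braid_class:
  assumes "phi c = (k, 0, 0, k)"
  shows "class_mul c (braid_class u) = braid_class (u @ c)"
proof -
  define v where "v = (SOME w. w \<in> braid_class u)"
  have "sl2_conj (phi u) (phi v) \<and> exp_sum u = exp_sum v"
    using braid_conj_some_braid_class[of u] by (simp add: v_def braid_conj_iff)
  then have "braid_conj (v @ c) (u @ c)"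
    using sl2_conj_mmul_scalar sl2_conj_sym assms
    by (simp add: braid_conj_iff phi_append exp_sum_append del: phi.simps)
  then show ?thesis by (simp add: class_mul_def v_def[symmetric] braid_class_eq_iff)
qed

lemma btr_append_scalar: "phi c = (k, 0, 0, k) \<Longrightarrow> btr (u @ c) = k * btr u"
  by (cases "phi u") (simp add: btr_def phi_append mtr_def mmul_def algebra_simps del: phi.simps)

lemma class_mul_in_X:
  assumes "phi c = (k, 0, 0, k)" and "C \<in> X t n"
  shows "class_mul c C \<in> X (k * t) (n + exp_sum c)"
  using assms class_mul_braid_class[OF assms(1)] btr_append_scalar[OF assms(1)]
  by (auto simp: mem_X_iff exp_sum_append)

lemma class_mul_class_mul:
  assumes "phi c = (k, 0, 0, k)" "phi c' = (k, 0, 0, k)" "k * k = 1"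
    and "exp_sum c' = - exp_sum c" and "C \<in> X t n"
  shows "class_mul c' (class_mul c C) = C"
proof -
  obtain u where u: "C = braid_class u" using assms(5) by (auto simp: mem_X_iff)
  have "phi (u @ c @ c') = phi u"
    using assms(1-3) by (cases "phi u") (simp add: phi_append mmul_def del: phi.simps)
  then have "braid_eq ((u @ c) @ c') u"
    using assms(4) by (simp add: braid_eq_iff_phi_exp_sum exp_sum_append)
  then show ?thesis
    by (simp add: u class_mul_braid_class[OF assms(1)] class_mul_braid_class[OF assms(2)]
        braid_class_eq_iff braid_eq_imp_braid_conj)
qed

lemma bij_betw_class_mul:
  assumes "phi c = (k, 0, 0, k)" "phi c' = (k, 0, 0, k)" "k * k = 1"
    and "exp_sum c' = - exp_sum c"
  shows "bij_betw (class_mul c) (X t n) (X (k * t) (n + exp_sum c))"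
proof (rule bij_betw_byWitness[where f' = "class_mul c'"])
  have X_back: "X (k * (k * t)) (n + exp_sum c + exp_sum c') = X t n"
    using assms(3,4) by (simp add: mult.assoc[symmetric])
  show "\<forall>C \<in> X t n. class_mul c' (class_mul c C) = C"
    using class_mul_class_mul[OF assms] by blast
  show "\<forall>C \<in> X (k * t) (n + exp_sum c). class_mul c (class_mul c' C) = C"
    using class_mul_class_mul[OF assms(2,1,3)] assms(4) by simp
  show "class_mul c ` X t n \<subseteq> X (k * t) (n + exp_sum c)"
    using class_mul_in_X[OF assms(1)] by blast
  show "class_mul c' ` X (k * t) (n + exp_sum c) \<subseteq> X t n"
    using class_mul_in_X[OF assms(2), of _ "k * t" "n + exp_sum c"] X_back by blast
qed

lemma phi_delta2_pow_scalar:
  "phi (delta2_pow m) = (if even m then 1 else -1, 0, 0, if even m then 1 else -1)"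
  by (simp add: phi_delta2_pow mid_def negI_def)

theorem bij_betw_class_mul_delta2_pow:
  "bij_betw (class_mul (delta2_pow m)) (X t n) (X ((if even m then 1 else -1) * t) (n + 6 * m))"
  using bij_betw_class_mul[OF phi_delta2_pow_scalar[of m], of "delta2_pow (- m)"]
    phi_delta2_pow_scalar[of "- m"]
  by (simp add: exp_sum_delta2_pow)

definition neg_class :: "mat2 set \<Rightarrow> mat2 set" where
  "neg_class K = (\<lambda>B. mmul B negI) ` K"

lemma mmul_negI_negI: "mmul (mmul B negI) negI = B"
  by (cases B) (simp add: mmul_def negI_def)

lemma mdet_mmul_negI: "mdet (mmul B negI) = mdet B"
  by (cases B) (simp add: mmul_def mdet_def negI_def)

lemma neg_class_sl2_class: "neg_class (sl2_class A) = sl2_class (mmul A negI)"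
proof -
  have conj_neg: "sl2_conj A B \<Longrightarrow> sl2_conj (mmul A negI) (mmul B negI)" for A B
    using sl2_conj_mmul_scalar[of A B "-1"] by (simp add: negI_def)
  show ?thesis
  proof (rule set_eqI, rule iffI)
    fix x assume "x \<in> neg_class (sl2_class A)"
    then obtain B where "B \<in> sl2_class A" "x = mmul B negI" by (auto simp: neg_class_def)
    then show "x \<in> sl2_class (mmul A negI)"
      using conj_neg by (simp add: sl2_class_def SL2Z_def mdet_mmul_negI)
  next
    fix x assume x: "x \<in> sl2_class (mmul A negI)"
    then have "mmul x negI \<in> sl2_class A"
      using conj_neg[of "mmul A negI" x]
      by (simp add: sl2_class_def SL2Z_def mdet_mmul_negI mmul_negI_negI)
    then show "x \<in> neg_class (sl2_class A)"
      unfolding neg_class_def by (rule image_eqI[rotated]) (simp add: mmul_negI_negI)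
  qed
qed

lemma bij_betw_neg_class: "bij_betw neg_class (Y t) (Y (- t))"
proof (rule bij_betw_byWitness[where f' = neg_class])
  have neg_neg: "neg_class (neg_class K) = K" for K
    by (simp add: neg_class_def image_image mmul_negI_negI)
  have maps: "neg_class ` Y s \<subseteq> Y (- s)" for s
  proof
    fix K assume "K \<in> neg_class ` Y s"
    then obtain A where A: "K = neg_class (sl2_class A)" "mdet A = 1" "mtr A = s"
      by (auto simp: Y_def SL2Z_def)
    have "mdet (mmul A negI) = 1" "mtr (mmul A negI) = - s"
      using A by (cases A; simp add: mmul_def mdet_def mtr_def negI_def)+
    then show "K \<in> Y (- s)" unfolding Y_def SL2Z_def A(1) neg_class_sl2_class by blast
  qed
  show "\<forall>K \<in> Y t. neg_class (neg_class K) = K" "\<forall>K \<in> Y (- t). neg_class (neg_class K) = K"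
    by (simp_all add: neg_neg)
  show "neg_class ` Y t \<subseteq> Y (- t)" "neg_class ` Y (- t) \<subseteq> Y t"
    using maps[of t] maps[of "- t"] by simp_all
qed

lemma phi_star_class_mul_delta2_pow:
  assumes "C \<in> X t n"
  shows "phi_star (class_mul (delta2_pow m) C)
    = (if even m then phi_star C else neg_class (phi_star C))"
proof -
  obtain u where "C = braid_class u" using assms by (auto simp: mem_X_iff)
  then show ?thesis
    using phi_delta2_pow[of m]
    by (simp add: class_mul_braid_class[OF phi_delta2_pow_scalar] phi_star_braid_class
        neg_class_sl2_class phi_append del: phi.simps)
qed

theorem inj_on_phi_star_X: "inj_on phi_star (X t n)"
proof (rule inj_onI)
  fix C D assume "C \<in> X t n" "D \<in> X t n" and "phi_star C = phi_star D"
  moreover obtain g h where "C = braid_class g" "exp_sum g = n" "D = braid_class h" "exp_sum h = n"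
    using \<open>C \<in> X t n\<close> \<open>D \<in> X t n\<close> by (auto simp: mem_X_iff)
  ultimately show "C = D"
    by (simp add: phi_star_braid_class sl2_class_eq_iff phi_in_SL2Z braid_class_eq_iff braid_conj_iff)
qed

lemma sl2_class_phi_in_Y: "btr w = t \<Longrightarrow> sl2_class (phi w) \<in> Y t"
  unfolding Y_def btr_def using phi_in_SL2Z by blast

lemma inj_on_phi_star_Sigma:
  "inj_on (\<lambda>(j, C). phi_star C) (SIGMA j:{0..11::int}. X t (n + j))"
proof (rule inj_onI, clarify)
  fix j1 C1 j2 C2
  assume j: "j1 \<in> {0..11}" "j2 \<in> {0..11}" and C: "C1 \<in> X t (n + j1)" "C2 \<in> X t (n + j2)"
    and eq: "phi_star C1 = phi_star C2"
  obtain g h where g: "C1 = braid_class g" "exp_sum g = n + j1"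
    and h: "C2 = braid_class h" "exp_sum h = n + j2"
    using C by (auto simp: mem_X_iff)
  have "sl2_conj (phi g) (phi h)"
    using eq g(1) h(1) by (simp add: phi_star_braid_class sl2_class_eq_iff phi_in_SL2Z)
  then have "12 dvd (j1 - j2)"
    using sl2_conj_phi_imp_exp_sum_cong_12 g(2) h(2) by fastforce
  moreover have "\<bar>j1 - j2\<bar> < 12" using j by auto
  ultimately have "j1 = j2" using dvd_imp_le_int[of "j1 - j2" 12] by fastforce
  with C eq show "j1 = j2 \<and> C1 = C2" using inj_on_phi_star_X[of t "n + j1"] by (auto dest: inj_onD)
qed

lemma phi_star_Sigma_image:
  "(\<lambda>(j, C). phi_star C) ` (SIGMA j:{0..11::int}. X t (n + j)) = Y t"
proof
  show "(\<lambda>(j, C). phi_star C) ` (SIGMA j:{0..11::int}. X t (n + j)) \<subseteq> Y t"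
    by (auto simp: mem_X_iff phi_star_braid_class sl2_class_phi_in_Y)
next
  show "Y t \<subseteq> (\<lambda>(j, C). phi_star C) ` (SIGMA j:{0..11::int}. X t (n + j))"
  proof
    fix K assume "K \<in> Y t"
    then obtain A where A: "K = sl2_class A" "A \<in> SL2Z" "mtr A = t" unfolding Y_def by blast
    obtain w where w: "phi w = A" using phi_surj[OF A(2)] by blast
    define j where "j = (exp_sum w - n) mod 12"
    define k where "k = - ((exp_sum w - n) div 12)"
    have j_range: "j \<in> {0..11}" unfolding j_def by simp
    have "12 * k = n + j - exp_sum w"
      unfolding k_def j_def using div_mult_mod_eq[of "exp_sum w - n" 12] by linarith
    then have "exp_sum (w @ delta2_pow (2 * k)) = n + j"
      by (simp add: exp_sum_append exp_sum_delta2_pow)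
    moreover have "phi (w @ delta2_pow (2 * k)) = A"
      using w by (simp add: phi_append phi_delta2_pow del: phi.simps)
    ultimately have "braid_class (w @ delta2_pow (2 * k)) \<in> X t (n + j)"
      "phi_star (braid_class (w @ delta2_pow (2 * k))) = K"
      using A by (auto simp: mem_X_iff btr_def phi_star_braid_class)
    then show "K \<in> (\<lambda>(j, C). phi_star C) ` (SIGMA j:{0..11::int}. X t (n + j))"
      using j_range by force
  qed
qed

theorem lemma2p1:
  fixes t n :: int
  shows "inj_on phi_star (X t n) \<and>
    (\<exists>\<alpha> \<beta>. bij_betw \<alpha> (X t n) (X (-t) (n + 6)) \<and> bij_betw \<beta> (Y t) (Y (-t)) \<and>
            (\<forall>C \<in> X t n. phi_star (\<alpha> C) = \<beta> (phi_star C))) \<and>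
    (\<exists>\<gamma>. bij_betw \<gamma> (X t n) (X t (n + 12)) \<and>
            (\<forall>C \<in> X t n. phi_star (\<gamma> C) = phi_star C)) \<and>
    bij_betw (\<lambda>(j, C). phi_star C) (SIGMA j:{0..11::int}. X t (n + j)) (Y t)"
proof (intro conjI exI)
  show "bij_betw (class_mul (delta2_pow 1)) (X t n) (X (- t) (n + 6))"
    using bij_betw_class_mul_delta2_pow[of 1 t n] by simp
  show "bij_betw (class_mul (delta2_pow 2)) (X t n) (X t (n + 12))"
    using bij_betw_class_mul_delta2_pow[of 2 t n] by simp
  show "\<forall>C \<in> X t n. phi_star (class_mul (delta2_pow 1) C) = neg_class (phi_star C)"
    "\<forall>C \<in> X t n. phi_star (class_mul (delta2_pow 2) C) = phi_star C"
    using phi_star_class_mul_delta2_pow[of _ t n] by simp_all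
  show "bij_betw (\<lambda>(j, C). phi_star C) (SIGMA j:{0..11::int}. X t (n + j)) (Y t)"
    unfolding bij_betw_def using inj_on_phi_star_Sigma phi_star_Sigma_image by blast
qed (rule inj_on_phi_star_X bij_betw_neg_class)+

end
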